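(* Let $n \ge 1$ and $t$ be integers with $1 \le t < \frac{n+1}{2}$. Then the cross-blockchain transaction task $(\mathcal{I}, \mathcal{O}, \Delta)$ on $n+1$ blockchains, defined in the context, has no $t$-resilient protocol in the asynchronous message-passing model with crash failures. That is, no such protocol can guarantee that all local transactions end either all committed or all aborted, in accordance with the carrier map $\Delta$.
   Context: Setting. There are $n+1$ distinct blockchains $C_0,\dots,C_n$. An $(n+1)$-party cross-blockchain transaction touches exactly one block $v_i$ on each blockchain $C_i$. Input complex $\mathcal{I}$. The vertices are the $3(n+1)$ pairs $(v_i, a)$ with $0 \le i \le n$ and $a \in \{0,1,\bot\}$. Here $0$ means the local transaction is not committed, $1$ means it is committed, and $\bot$ means the block's branch was suspended by a fork. A nonempty set of vertices is a simplex if and only if its vertices involve pairwise distinct blocks. Output complex $\mathcal{O}$. The vertices are the pairs $(v_i, b)$ with $b \in \{0,1\}$, where $1$ means committed and $0$ means aborted. A nonempty set of vertices is a simplex if and only if its vertices involve pairwise distinct blocks and all carry the same value $b$. Carrier map $\Delta$. For a simplex $\sigma$ of $\mathcal{I}$ with block set $B(\sigma)$: - $\Delta(\sigma)$ is the simplex $\{(v,1): v \in B(\sigma)\}$ with its faces, if all input values in $\sigma$ are $1$; - it is $\{(v,0): v\in B(\sigma)\}$ with its faces, if some input value in $\sigma$ is $\bot$; - otherwise it is the subcomplex of $\mathcal{O}$ consisting of all simplices whose blocks lie in $B(\sigma)$, i.e. both the all-$0$ and the all-$1$ simplices on $B(\sigma)$ and their faces. Computational model. There are $n+1$ processes (process $i$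 corresponds to blockchain $C_i$) communicating by asynchronous message passing, with at most $t$ of them failing by crashing. Process $i$ starts with input vertex $(v_i,a_i)$ of $\mathcal{I}$. A $t$-resilient protocol solves the task if, in every execution with at most $t$ crashes, each non-crashed process $i$ eventually decides an output vertex $(v_i,b_i)$ of $\mathcal{O}$, and the set of decided vertices is a simplex of $\Delta(\sigma)$, where $\sigma$ is the simplex of inputs of the participating processes. *)

theory Defs
  imports Main "HOL-Library.Multiset"
begin

(* Blocks: block v_i on blockchain C_i is identified with the index i (0 <= i <= n). *)

datatype inval = InZero | InOne | InBot   (* 0 = not committed, 1 = committed, \<bottom> = suspended *)

type_synonym in_vertex = "nat \<times> inval"
type_synonym out_vertex = "nat \<times> bool"   (* True = committed (1), False = aborted (0) *)

definition in_simplex :: "nat \<Rightarrow> in_vertex set \<Rightarrow> bool" where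
  "in_simplex n S \<longleftrightarrow> S \<noteq> {} \<and> fst ` S \<subseteq> {0..n} \<and> inj_on fst S"

definition out_simplex :: "nat \<Rightarrow> out_vertex set \<Rightarrow> bool" where
  "out_simplex n S \<longleftrightarrow> S \<noteq> {} \<and> fst ` S \<subseteq> {0..n} \<and> inj_on fst S \<and> (\<exists>b. snd ` S = {b})"

(* Carrier map Delta: the set of simplices of the subcomplex Delta(sigma) of O *)
definition Delta :: "nat \<Rightarrow> in_vertex set \<Rightarrow> out_vertex set set" where
  "Delta n \<sigma> =
     (if (\<forall>x\<in>\<sigma>. snd x = InOne) then {\<tau>. \<tau> \<noteq> {} \<and> \<tau> \<subseteq> {(v, True) | v. v \<in> fst ` \<sigma>}}
      else if (\<exists>x\<in>\<sigma>. snd x = InBot) then {\<tau>. \<tau> \<noteq> {} \<and> \<tau> \<subseteq> {(v, False) | v. v \<in> fst ` \<sigma>}}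
      else {\<tau>. out_simplex n \<tau> \<and> fst ` \<tau> \<subseteq> fst ` \<sigma>})"

(* A protocol for processes 0..n consists of
     init  : initial local state of process i given its input vertex (v_i, a_i);
     stp : a step of process p in local state s receiving an optional message
             (None = no message delivered); returns new local state and a list of
             messages sent, each with its destination process;
     dec   : the decision (output value) recorded in a local state, if any.
   A configuration is a vector of local states and a multiset of in-transit
   messages (destination, content). An event is (p, received message option). *)

type_synonym ('s, 'm) config = "(nat \<Rightarrow> 's) \<times> (nat \<times> 'm) multiset"

definition execution ::
  "nat \<Rightarrow> (in_vertex \<Rightarrow> 's) \<Rightarrow> (nat \<Rightarrow> 's \<Rightarrow> 'm option \<Rightarrow> 's \<times> (nat \<times> 'm) list)
   \<Rightarrow> (nat \<Rightarrow> inval) \<Rightarrow> (nat \<Rightarrow> ('s, 'm) config) \<Rightarrow> (nat \<Rightarrow> nat \<times> 'm option) \<Rightarrow> bool" where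
  "execution n init stp a C E \<longleftrightarrow>
     C 0 = ((\<lambda>i. init (i, a i)), {#}) \<and>
     (\<forall>k. fst (E k) \<le> n \<and>
          (case snd (E k) of None \<Rightarrow> True | Some m \<Rightarrow> (fst (E k), m) \<in># snd (C k)) \<and>
          (let p = fst (E k); mo = snd (E k); r = stp p (fst (C k) p) mo in
             C (Suc k) = ((fst (C k))(p := fst r),
                          snd (C k) - (case mo of None \<Rightarrow> {#} | Some m \<Rightarrow> {#(p, m)#}) + mset (snd r))))"

definition correct :: "nat \<Rightarrow> (nat \<Rightarrow> nat \<times> 'm option) \<Rightarrow> nat \<Rightarrow> bool" where
  "correct n E p \<longleftrightarrow> p \<le> n \<and> infinite {k. fst (E k) = p}"

definition faulty :: "nat \<Rightarrow> (nat \<Rightarrow> nat \<times> 'm option) \<Rightarrow> nat set" where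
  "faulty n E = {p. p \<le> n \<and> \<not> correct n E p}"

definition fair :: "nat \<Rightarrow> (nat \<Rightarrow> ('s, 'm) config) \<Rightarrow> (nat \<Rightarrow> nat \<times> 'm option) \<Rightarrow> bool" where
  "fair n C E \<longleftrightarrow>
     (\<forall>k p m. correct n E p \<and> (p, m) \<in># snd (C k) \<longrightarrow> (\<exists>k'\<ge>k. E k' = (p, Some m)))"

definition participating :: "nat \<Rightarrow> (nat \<Rightarrow> nat \<times> 'm option) \<Rightarrow> nat set" where
  "participating n E = {p. p \<le> n \<and> (\<exists>k. fst (E k) = p)}"

definition input_simplex_of :: "nat \<Rightarrow> (nat \<Rightarrow> inval) \<Rightarrow> (nat \<Rightarrow> nat \<times> 'm option) \<Rightarrow> in_vertex set" where
  "input_simplex_of n a E = {(p, a p) | p. p \<in> participating n E}"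

definition decided :: "nat \<Rightarrow> ('s \<Rightarrow> bool option) \<Rightarrow> (nat \<Rightarrow> ('s, 'm) config)
                        \<Rightarrow> (nat \<Rightarrow> nat \<times> 'm option) \<Rightarrow> out_vertex set" where
  "decided n dec C E = {(p, b) | p b. p \<in> participating n E \<and> (\<exists>k. dec (fst (C k) p) = Some b)}"

definition solves_task ::
  "nat \<Rightarrow> nat \<Rightarrow> (in_vertex \<Rightarrow> 's) \<Rightarrow> (nat \<Rightarrow> 's \<Rightarrow> 'm option \<Rightarrow> 's \<times> (nat \<times> 'm) list)
   \<Rightarrow> ('s \<Rightarrow> bool option) \<Rightarrow> bool" where
  "solves_task n t init stp dec \<longleftrightarrow>
     (\<forall>a C E. execution n init stp a C E \<and> fair n C E \<and> card (faulty n E) \<le> t \<longrightarrow>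
        (\<forall>p. correct n E p \<longrightarrow> (\<exists>k b. dec (fst (C k) p) = Some b)) \<and>
        decided n dec C E \<in> Delta n (input_simplex_of n a E))"

end

theory Submission
  imports Defs "HOL-Library.Infinite_Set"
begin

(* One crash already suffices.  Run the processes 1..n
   round-robin with all inputs 1 while process 0 never moves: process 1 must decide, and since
   every participant has input 1 it commits, at some time K.  Now give process 0 the input \<bottom>
   and let it take a single step exactly at time K and then crash.  Up to time K process 1
   cannot tell the two runs apart, so it commits again, although the participating input \<bottom>
   forces everybody to abort. *)

fun list_pos :: "'a \<Rightarrow> 'a list \<Rightarrow> nat" where
  "list_pos x [] = 0"
| "list_pos x (y # ys) = (if y = x then 0 else Suc (list_pos x ys))"

lemma list_pos_append: "x \<in> set L \<Longrightarrow> list_pos x (L @ M) = list_pos x L"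
  by (induction L) auto

lemma list_pos_remove1:
  "x \<in> set L \<Longrightarrow> y \<noteq> x \<Longrightarrow> x \<in> set (remove1 y L) \<and> list_pos x (remove1 y L) \<le> list_pos x L"
  by (induction L) auto

lemma list_pos_remove1_find:
  assumes "find P L = Some y" "P x" "y \<noteq> x" "x \<in> set L"
  shows "list_pos x (remove1 y L) < list_pos x L"
  using assms by (induction L) (auto split: if_splits)

lemma no_infinite_descent_nat:
  fixes f :: "nat \<Rightarrow> nat"
  assumes "\<And>i. k \<le> i \<Longrightarrow> f (Suc i) \<le> f i"
    and "\<And>i. k \<le> i \<Longrightarrow> P i \<Longrightarrow> f (Suc i) < f i"
    and "infinite {i. P i}"
  shows False
  using assms(1,2)
proof (induction "f k" arbitrary: k rule: less_induct)
  case less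
  obtain j where "k \<le> j" "P j"
    using \<open>infinite {i. P i}\<close> by (auto simp: infinite_nat_iff_unbounded_le)
  have "f j \<le> f k"
    using \<open>k \<le> j\<close> by (induction j rule: dec_induct) (auto intro: order_trans less.prems(1))
  with less.prems(2)[OF \<open>k \<le> j\<close> \<open>P j\<close>] have "f (Suc j) < f k" by simp
  with less.prems \<open>k \<le> j\<close> show False by (intro less.hyps[of "Suc j"]) auto
qed

(* The canonical execution of a schedule sg: the scheduled process receives the oldest message
   in transit to it, and newly sent messages are queued at the end. *)

definition first_msg :: "nat \<Rightarrow> (nat \<times> 'm) list \<Rightarrow> 'm option" where
  "first_msg p L = map_option snd (find (\<lambda>x. fst x = p) L)"

definition consume :: "nat \<Rightarrow> 'm option \<Rightarrow> (nat \<times> 'm) list \<Rightarrow> (nat \<times> 'm) list" where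
  "consume p mo L = (case mo of None \<Rightarrow> L | Some m \<Rightarrow> remove1 (p, m) L)"

fun sched_run :: "(nat \<Rightarrow> 's \<Rightarrow> 'm option \<Rightarrow> 's \<times> (nat \<times> 'm) list) \<Rightarrow> (nat \<Rightarrow> nat) \<Rightarrow> (nat \<Rightarrow> 's)
    \<Rightarrow> nat \<Rightarrow> (nat \<Rightarrow> 's) \<times> (nat \<times> 'm) list" where
  "sched_run stp sg s0 0 = (s0, [])"
| "sched_run stp sg s0 (Suc k) =
    (let s = fst (sched_run stp sg s0 k); L = snd (sched_run stp sg s0 k);
         p = sg k; mo = first_msg p L; r = stp p (s p) mo
     in (s(p := fst r), consume p mo L @ snd r))"

definition sched_config :: "(nat \<Rightarrow> 's \<Rightarrow> 'm option \<Rightarrow> 's \<times> (nat \<times> 'm) list) \<Rightarrow> (nat \<Rightarrow> nat)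
    \<Rightarrow> (nat \<Rightarrow> 's) \<Rightarrow> nat \<Rightarrow> ('s, 'm) config" where
  "sched_config stp sg s0 k = (fst (sched_run stp sg s0 k), mset (snd (sched_run stp sg s0 k)))"

definition sched_event :: "(nat \<Rightarrow> 's \<Rightarrow> 'm option \<Rightarrow> 's \<times> (nat \<times> 'm) list) \<Rightarrow> (nat \<Rightarrow> nat)
    \<Rightarrow> (nat \<Rightarrow> 's) \<Rightarrow> nat \<Rightarrow> nat \<times> 'm option" where
  "sched_event stp sg s0 k = (sg k, first_msg (sg k) (snd (sched_run stp sg s0 k)))"

lemma find_SomeD: "find P L = Some x \<Longrightarrow> x \<in> set L \<and> P x"
  by (induction L) (auto split: if_splits)

lemma first_msg_find: "first_msg p L = Some m \<Longrightarrow> find (\<lambda>x. fst x = p) L = Some (p, m)"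
  unfolding first_msg_def using find_SomeD[of "\<lambda>x. fst x = p" L] by fastforce

lemma first_msg_in_set: "first_msg p L = Some m \<Longrightarrow> (p, m) \<in> set L"
  by (auto dest: first_msg_find find_SomeD)

lemma first_msg_None: "first_msg p L = None \<Longrightarrow> (p, m) \<notin> set L"
  unfolding first_msg_def by (auto simp: find_None_iff)

lemma execution_sched:
  assumes "\<And>i. sg i \<le> n"
  shows "execution n init stp a
           (sched_config stp sg (\<lambda>i. init (i, a i))) (sched_event stp sg (\<lambda>i. init (i, a i)))"
  using assms
  by (auto simp: execution_def sched_config_def sched_event_def Let_def consume_def mset_remove1
      split: option.split dest: first_msg_in_set)

lemma consume_first_msg:
  fixes M :: "(nat \<times> 'm) list"
  assumes "(q, m) \<in> set L" "first_msg p L \<noteq> Some m \<or> q \<noteq> p"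
  defines "L' \<equiv> consume p (first_msg p L) L @ M"
  shows "(q, m) \<in> set L'" and "list_pos (q, m) L' \<le> list_pos (q, m) L"
    and "p = q \<Longrightarrow> list_pos (q, m) L' < list_pos (q, m) L"
proof -
  have "(q, m) \<in> set L' \<and> list_pos (q, m) L' \<le> list_pos (q, m) L \<and>
        (p = q \<longrightarrow> list_pos (q, m) L' < list_pos (q, m) L)"
  proof (cases "first_msg p L")
    case None
    with assms(1) have "q \<noteq> p" using first_msg_None by metis
    with None assms(1) show ?thesis by (simp add: L'_def consume_def list_pos_append)
  next
    case (Some m')
    with assms(2) have other: "(p, m') \<noteq> (q, m)" by auto
    then have kept: "(q, m) \<in> set (remove1 (p, m') L)"
      and "list_pos (q, m) (remove1 (p, m') L) \<le> list_pos (q, m) L"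
      using list_pos_remove1[OF assms(1) other] by auto
    moreover have "p = q \<Longrightarrow> list_pos (q, m) (remove1 (p, m') L) < list_pos (q, m) L"
      using list_pos_remove1_find[OF first_msg_find[OF Some]] other assms(1) by simp
    moreover have "L' = remove1 (p, m') L @ M"
      using Some by (simp add: L'_def consume_def)
    ultimately show ?thesis
      by (auto simp: list_pos_append)
  qed
  then show "(q, m) \<in> set L'" "list_pos (q, m) L' \<le> list_pos (q, m) L"
    "p = q \<Longrightarrow> list_pos (q, m) L' < list_pos (q, m) L"
    by auto
qed

lemma sched_run_transit:
  "snd (sched_run stp sg s0 (Suc k)) =
     consume (sg k) (first_msg (sg k) (snd (sched_run stp sg s0 k))) (snd (sched_run stp sg s0 k)) @
     snd (stp (sg k) (fst (sched_run stp sg s0 k) (sg k)) (first_msg (sg k) (snd (sched_run stp sg s0 k))))"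
  by (simp add: Let_def)

lemma correct_sched_iff: "correct n (sched_event stp sg s0) p \<longleftrightarrow> p \<le> n \<and> infinite {k. sg k = p}"
  by (simp add: correct_def sched_event_def)

(* A message that is never delivered would move strictly forward in the queue at each of the
   infinitely many steps of its addressee. *)
lemma fair_sched: "fair n (sched_config stp sg s0) (sched_event stp sg s0)"
  unfolding fair_def
proof (intro allI impI)
  fix k p m
  let ?L = "\<lambda>i. snd (sched_run stp sg s0 i)"
  assume "correct n (sched_event stp sg s0) p \<and> (p, m) \<in># snd (sched_config stp sg s0 k)"
  then have inf: "infinite {i. sg i = p}" and sent: "(p, m) \<in> set (?L k)"
    by (simp_all add: correct_sched_iff sched_config_def)
  show "\<exists>k'\<ge>k. sched_event stp sg s0 k' = (p, Some m)"
  proof (rule ccontr)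
    assume "\<not> ?thesis"
    then have undelivered: "first_msg (sg i) (?L i) \<noteq> Some m \<or> p \<noteq> sg i" if "k \<le> i" for i
      using that by (auto simp: sched_event_def)
    have in_transit: "(p, m) \<in> set (?L i)" if "k \<le> i" for i
      using that
    proof (induction i rule: dec_induct)
      case (step i)
      show ?case
        unfolding sched_run_transit
        by (rule consume_first_msg(1)[OF step.IH undelivered[OF step.hyps(1)]])
    qed (rule sent)
    show False
    proof (rule no_infinite_descent_nat[of k "\<lambda>i. list_pos (p, m) (?L i)" "\<lambda>i. sg i = p"])
      fix i assume "k \<le> i"
      note queued = in_transit[OF this] undelivered[OF this]
      show "list_pos (p, m) (?L (Suc i)) \<le> list_pos (p, m) (?L i)"
        unfolding sched_run_transit by (rule consume_first_msg(2)[OF queued])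
      show "sg i = p \<Longrightarrow> list_pos (p, m) (?L (Suc i)) < list_pos (p, m) (?L i)"
        unfolding sched_run_transit by (rule consume_first_msg(3)[OF queued])
    qed (use inf in simp)
  qed
qed

lemma participating_sched: "participating n (sched_event stp sg s0) = {p. p \<le> n \<and> (\<exists>k. sg k = p)}"
  by (simp add: participating_def sched_event_def)

lemma sched_run_unscheduled_state:
  assumes "\<And>i. i < K \<Longrightarrow> sg' i = sg i" and "\<And>i. i < K \<Longrightarrow> sg i \<noteq> q" and "k \<le> K"
  shows "sched_run stp sg' (s0(q := x)) k = ((fst (sched_run stp sg s0 k))(q := x), snd (sched_run stp sg s0 k))"
  using \<open>k \<le> K\<close>
proof (induction k)
  case (Suc k)
  with assms(1,2)[of k] show ?case by (auto simp: Let_def fun_eq_iff)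
qed simp

lemma solves_task_sched:
  fixes a :: "nat \<Rightarrow> inval"
  assumes "solves_task n t init stp dec" and "1 \<le> t"
    and "\<And>i. sg i \<le> n" and "\<forall>p. 1 \<le> p \<and> p \<le> n \<longrightarrow> infinite {k. sg k = p}"
  defines "s0 \<equiv> \<lambda>i. init (i, a i)"
  shows "\<And>p. 1 \<le> p \<Longrightarrow> p \<le> n \<Longrightarrow> \<exists>k b. dec (fst (sched_run stp sg s0 k) p) = Some b"
    and "decided n dec (sched_config stp sg s0) (sched_event stp sg s0)
           \<in> Delta n (input_simplex_of n a (sched_event stp sg s0))"
proof -
  have "faulty n (sched_event stp sg s0) \<subseteq> {0}"
  proof
    fix p assume "p \<in> faulty n (sched_event stp sg s0)"
    then have "p \<le> n" and finite: "finite {k. sg k = p}"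
      by (simp_all add: faulty_def correct_sched_iff)
    show "p \<in> {0}"
    proof (rule ccontr)
      assume "p \<notin> {0}"
      then have "1 \<le> p" by simp
      with assms(4) \<open>p \<le> n\<close> have "infinite {k. sg k = p}" by blast
      with finite show False by contradiction
    qed
  qed
  then have "card (faulty n (sched_event stp sg s0)) \<le> card {0::nat}"
    by (intro card_mono) simp_all
  with \<open>1 \<le> t\<close> have "card (faulty n (sched_event stp sg s0)) \<le> t"
    by simp
  moreover have "execution n init stp a (sched_config stp sg s0) (sched_event stp sg s0)"
    unfolding s0_def by (rule execution_sched[OF assms(3)])
  ultimately have decides: "\<And>p. correct n (sched_event stp sg s0) p \<Longrightarrow>
                \<exists>k b. dec (fst (sched_config stp sg s0 k) p) = Some b"
    and in_Delta: "decided n dec (sched_config stp sg s0) (sched_event stp sg s0)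
           \<in> Delta n (input_simplex_of n a (sched_event stp sg s0))"
    using assms(1) fair_sched unfolding solves_task_def by blast+
  show "decided n dec (sched_config stp sg s0) (sched_event stp sg s0)
           \<in> Delta n (input_simplex_of n a (sched_event stp sg s0))"
    by (rule in_Delta)
  fix p assume "1 \<le> p" "p \<le> n"
  with decides[of p] assms(4) show "\<exists>k b. dec (fst (sched_run stp sg s0 k) p) = Some b"
    by (simp add: correct_sched_iff sched_config_def)
qed

lemma Delta_all_committed:
  "\<tau> \<in> Delta n \<sigma> \<Longrightarrow> \<forall>x\<in>\<sigma>. snd x = InOne \<Longrightarrow> (v, b) \<in> \<tau> \<Longrightarrow> b"
  by (auto simp: Delta_def)

lemma Delta_suspended:
  assumes "\<tau> \<in> Delta n \<sigma>" "(u, InBot) \<in> \<sigma>" "(v, b) \<in> \<tau>"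
  shows "\<not> b"
proof -
  from \<open>(u, InBot) \<in> \<sigma>\<close> have "\<not> (\<forall>x\<in>\<sigma>. snd x = InOne)" "\<exists>x\<in>\<sigma>. snd x = InBot"
    by force+
  with assms(1,3) show ?thesis by (auto simp: Delta_def)
qed

definition round_robin :: "nat \<Rightarrow> nat \<Rightarrow> nat" where
  "round_robin n i = Suc (i mod n)"

lemma round_robin_le: "1 \<le> n \<Longrightarrow> round_robin n i \<le> n"
  by (simp add: round_robin_def Suc_le_eq)

lemma infinite_round_robin:
  assumes "1 \<le> p" "p \<le> n"
  shows "infinite {i. round_robin n i = p}"
  unfolding infinite_nat_iff_unbounded_le
proof
  fix k
  have "k \<le> k * n"
    using assms by simp
  then have "k \<le> p - 1 + k * n"
    by linarith
  moreover have "round_robin n (p - 1 + k * n) = p"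
    using assms by (simp only: round_robin_def mod_mult_self1) simp
  ultimately show "\<exists>i\<ge>k. i \<in> {i. round_robin n i = p}" by blast
qed

lemma round_robin_commits:
  assumes "solves_task n t init stp dec" and "1 \<le> t" and "1 \<le> n"
  obtains K where "dec (fst (sched_run stp (round_robin n) (\<lambda>i. init (i, InOne)) K) 1) = Some True"
proof -
  let ?sg = "round_robin n" and ?s0 = "\<lambda>i. init (i, InOne)"
  have bounded: "\<And>i. ?sg i \<le> n"
    using \<open>1 \<le> n\<close> by (rule round_robin_le)
  have infinite: "\<forall>p. 1 \<le> p \<and> p \<le> n \<longrightarrow> infinite {k. ?sg k = p}"
    using infinite_round_robin by blast
  note run = solves_task_sched[where a = "\<lambda>_. InOne", OF assms(1,2) bounded infinite]
  obtain K b where K: "dec (fst (sched_run stp ?sg ?s0 K) 1) = Some b"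
    using run(1)[of 1] \<open>1 \<le> n\<close> by auto
  have "?sg 0 = 1"
    by (simp add: round_robin_def)
  with K \<open>1 \<le> n\<close>
  have decided: "(1, b) \<in> decided n dec (sched_config stp ?sg ?s0) (sched_event stp ?sg ?s0)"
    by (auto simp: decided_def participating_sched sched_config_def)
  have "\<forall>x\<in>input_simplex_of n (\<lambda>_. InOne) (sched_event stp ?sg ?s0). snd x = InOne"
    by (auto simp: input_simplex_of_def)
  from Delta_all_committed[OF run(2) this decided] have b .
  with K show ?thesis
    by (intro that) simp
qed

lemma round_robin_late_suspension:
  assumes "solves_task n t init stp dec" and "1 \<le> t" and "1 \<le> n"
  shows "dec (fst (sched_run stp (round_robin n) (\<lambda>i. init (i, InOne)) K) 1) \<noteq> Some True"
proof
  assume commit: "dec (fst (sched_run stp (round_robin n) (\<lambda>i. init (i, InOne)) K) 1) = Some True"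
  let ?sg = "(round_robin n)(K := 0)" and ?a = "(\<lambda>_. InOne)(0 := InBot)"
  let ?s0 = "\<lambda>i. init (i, ?a i)"
  have bounded: "\<And>i. ?sg i \<le> n"
    using round_robin_le[OF \<open>1 \<le> n\<close>] by simp
  have infinite: "\<forall>p. 1 \<le> p \<and> p \<le> n \<longrightarrow> infinite {k. ?sg k = p}"
  proof (intro allI impI, elim conjE)
    fix p assume "1 \<le> p" "p \<le> n"
    have "{k. round_robin n k = p} - {K} \<subseteq> {k. ?sg k = p}"
      by auto
    with infinite_round_robin[OF \<open>1 \<le> p\<close> \<open>p \<le> n\<close>] show "infinite {k. ?sg k = p}"
      using Diff_infinite_finite finite_subset by blast
  qed
  note run = solves_task_sched[where a = ?a, OF assms(1,2) bounded infinite]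
  have "?s0 = (\<lambda>i. init (i, InOne))(0 := init (0, InBot))"
    by auto
  moreover have "sched_run stp ?sg ((\<lambda>i. init (i, InOne))(0 := init (0, InBot))) K =
      ((fst (sched_run stp (round_robin n) (\<lambda>i. init (i, InOne)) K))(0 := init (0, InBot)),
       snd (sched_run stp (round_robin n) (\<lambda>i. init (i, InOne)) K))"
    by (rule sched_run_unscheduled_state[where K = K]) (simp_all add: round_robin_def)
  ultimately have "dec (fst (sched_run stp ?sg ?s0 K) 1) = Some True"
    using commit by simp
  moreover obtain k where "?sg k = 1"
    using infinite \<open>1 \<le> n\<close> not_finite_existsD by blast
  ultimately have "(1, True) \<in> decided n dec (sched_config stp ?sg ?s0) (sched_event stp ?sg ?s0)"
    using \<open>1 \<le> n\<close> by (auto simp: decided_def participating_sched sched_config_def split: if_splits)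
  moreover have "(0, InBot) \<in> input_simplex_of n ?a (sched_event stp ?sg ?s0)"
    by (auto simp: input_simplex_of_def participating_sched)
  ultimately show False
    using Delta_suspended[OF run(2)] by blast
qed

theorem proposition1:
  fixes n t :: nat
  assumes "1 \<le> n" and "1 \<le> t" and "2 * t < n + 1"
  shows "\<not> (\<exists>(init :: in_vertex \<Rightarrow> 's) (stp :: nat \<Rightarrow> 's \<Rightarrow> 'm option \<Rightarrow> 's \<times> (nat \<times> 'm) list)
              (dec :: 's \<Rightarrow> bool option). solves_task n t init stp dec)"
proof (intro notI, elim exE)
  fix init stp dec
  assume protocol: "solves_task n t init stp dec"
  then obtain K
    where "dec (fst (sched_run stp (round_robin n) (\<lambda>i. init (i, InOne)) K) 1) = Some True"
    using assms(2,1) by (rule round_robin_commits)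
  with round_robin_late_suspension[OF protocol assms(2,1)] show False
    by blast
qed

end
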